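(* Let $G=(\Gamma,s)$ be a connected rooted graph. The map $c\mapsto \mathbf{deg}-c$ is a bijection from $\mathrm{SR}(G)$ to $\mathrm{PPF}(G)$; equivalently, for a configuration $c:\tilde V\to\mathbb{Z}$, we have $c\in\mathrm{SR}(G)$ if and only if $\mathbf{deg}-c\in\mathrm{PPF}(G)$, where $\mathbf{deg}:\tilde V\to\mathbb{N}$, $v\mapsto\deg(v)$.
   Context: $\mathbb{N}=\{1,2,\dots\}$. A rooted graph $G=(\Gamma,s)$ is a finite undirected multigraph without loops with a distinguished vertex $s$ (the sink), possibly disconnected for subgraphs below; $V$ is its vertex set, $\tilde V=V\setminus\{s\}$. $\mathrm{mult}(vw)$ is the number of edges between $v,w$; $\deg^A(v)=\sum_{w\in A}\mathrm{mult}(vw)$ for $A\subseteq V$, $\deg(v)=\deg^V(v)$. $\mathbf 1_w$ is the indicator function of $w$. Parking side: a $G$-parking function is $p:\tilde V\to\mathbb{N}$ such that for every nonempty $S\subseteq\tilde V$ there is $v\in S$ with $p(v)\le\deg^{V\setminus S}(v)$; $\mathrm{PF}(G)$ is their set. For $A\subseteq\tilde V$, $G^A$ is the induced subgraph on $A\cup\{s\}$ rooted at $s$. For an ordered pair $(A,B)$ of nonempty disjoint sets with $A\cup B=\tilde V$ and $p\in\mathrm{PF}(G)$, $p^A(v)=p(v)$ ($v\in A$) and $p^B(v)=p(v)-\deg^A(v)$ ($v\in B$); $p$ is decomposable w.r.t. $(A,B)$ if $p^A\in\mathrm{PF}(G^A)$ and $p^B\in\mathrm{PF}(G^B)$; $p$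 is prime if it is decomposable w.r.t. no such $(A,B)$; $\mathrm{PPF}(G)$ is the set of prime $G$-parking functions. Sandpile side: a configuration is $c:\tilde V\to\mathbb{Z}$; stable if $c(v)<\deg(v)$ for all $v$. A stable $c$ is recurrent if there is no nonempty $F\subseteq\tilde V$ with $c(v)<\deg^F(v)$ for all $v\in F$; $\mathrm{Rec}(G)$ is their set. $V_M(c)=\{v\in\tilde V: c(v)\ge\deg(v)-\mathrm{mult}(vs)\}$; $c^{v-}=c-\sum_{w\in\tilde V\setminus\{v\}}\mathrm{mult}(ws)\mathbf 1_w$. $c\in\mathrm{Rec}(G)$ is strongly recurrent if $c^{v-}\in\mathrm{Rec}(G)$ for all $v\in V_M(c)$; $\mathrm{SR}(G)$ is their set. *)

theory Defs
  imports Main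
begin

text \<open>A rooted multigraph without loops: a finite vertex set V, a sink s \<in> V and a
  symmetric edge-multiplicity function mult with mult v v = 0.  Subgraphs induced on
  a subset X of V use the same mult, with degrees computed within X.\<close>

definition rooted_graph :: "'a set \<Rightarrow> 'a \<Rightarrow> ('a \<Rightarrow> 'a \<Rightarrow> nat) \<Rightarrow> bool" where
  "rooted_graph V s mult \<longleftrightarrow> finite V \<and> s \<in> V \<and>
     (\<forall>v w. mult v w = mult w v) \<and> (\<forall>v. mult v v = 0)"

definition edge_rel :: "'a set \<Rightarrow> ('a \<Rightarrow> 'a \<Rightarrow> nat) \<Rightarrow> ('a \<times> 'a) set" where
  "edge_rel V mult = {(v, w). v \<in> V \<and> w \<in> V \<and> mult v w > 0}"

definition connected_graph :: "'a set \<Rightarrow> ('a \<Rightarrow> 'a \<Rightarrow> nat) \<Rightarrow> bool" where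
  "connected_graph V mult \<longleftrightarrow> (\<forall>v\<in>V. \<forall>w\<in>V. (v, w) \<in> (edge_rel V mult)\<^sup>*)"

definition deg_in :: "('a \<Rightarrow> 'a \<Rightarrow> nat) \<Rightarrow> 'a set \<Rightarrow> 'a \<Rightarrow> nat" where
  "deg_in mult A v = (\<Sum>w\<in>A. mult v w)"

definition is_PF :: "'a set \<Rightarrow> 'a \<Rightarrow> ('a \<Rightarrow> 'a \<Rightarrow> nat) \<Rightarrow> ('a \<Rightarrow> int) \<Rightarrow> bool" where
  "is_PF V s mult p \<longleftrightarrow> (\<forall>v\<in>V - {s}. p v \<ge> 1) \<and>
     (\<forall>S. S \<subseteq> V - {s} \<and> S \<noteq> {} \<longrightarrow> (\<exists>v\<in>S. p v \<le> int (deg_in mult (V - S) v)))"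

definition decomposable :: "'a set \<Rightarrow> 'a \<Rightarrow> ('a \<Rightarrow> 'a \<Rightarrow> nat) \<Rightarrow> ('a \<Rightarrow> int) \<Rightarrow> 'a set \<Rightarrow> 'a set \<Rightarrow> bool" where
  "decomposable V s mult p A B \<longleftrightarrow>
     is_PF (A \<union> {s}) s mult p \<and>
     is_PF (B \<union> {s}) s mult (\<lambda>v. p v - int (deg_in mult A v))"

definition is_PPF :: "'a set \<Rightarrow> 'a \<Rightarrow> ('a \<Rightarrow> 'a \<Rightarrow> nat) \<Rightarrow> ('a \<Rightarrow> int) \<Rightarrow> bool" where
  "is_PPF V s mult p \<longleftrightarrow> is_PF V s mult p \<and>
     \<not> (\<exists>A B. A \<noteq> {} \<and> B \<noteq> {} \<and> A \<inter> B = {} \<and> A \<union> B = V - {s} \<and>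
            decomposable V s mult p A B)"

definition stable :: "'a set \<Rightarrow> 'a \<Rightarrow> ('a \<Rightarrow> 'a \<Rightarrow> nat) \<Rightarrow> ('a \<Rightarrow> int) \<Rightarrow> bool" where
  "stable V s mult c \<longleftrightarrow> (\<forall>v\<in>V - {s}. c v < int (deg_in mult V v))"

definition recurrent :: "'a set \<Rightarrow> 'a \<Rightarrow> ('a \<Rightarrow> 'a \<Rightarrow> nat) \<Rightarrow> ('a \<Rightarrow> int) \<Rightarrow> bool" where
  "recurrent V s mult c \<longleftrightarrow> stable V s mult c \<and>
     \<not> (\<exists>F. F \<noteq> {} \<and> F \<subseteq> V - {s} \<and> (\<forall>v\<in>F. c v < int (deg_in mult F v)))"

definition VM :: "'a set \<Rightarrow> 'a \<Rightarrow> ('a \<Rightarrow> 'a \<Rightarrow> nat) \<Rightarrow> ('a \<Rightarrow> int) \<Rightarrow> 'a set" where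
  "VM V s mult c = {v \<in> V - {s}. c v \<ge> int (deg_in mult V v) - int (mult v s)}"

definition minus_conf :: "'a set \<Rightarrow> 'a \<Rightarrow> ('a \<Rightarrow> 'a \<Rightarrow> nat) \<Rightarrow> ('a \<Rightarrow> int) \<Rightarrow> 'a \<Rightarrow> ('a \<Rightarrow> int)" where
  "minus_conf V s mult c v =
     (\<lambda>w. c w - (if w \<in> V - {s} \<and> w \<noteq> v then int (mult w s) else 0))"

definition strongly_recurrent :: "'a set \<Rightarrow> 'a \<Rightarrow> ('a \<Rightarrow> 'a \<Rightarrow> nat) \<Rightarrow> ('a \<Rightarrow> int) \<Rightarrow> bool" where
  "strongly_recurrent V s mult c \<longleftrightarrow> recurrent V s mult c \<and>
     (\<forall>v\<in>VM V s mult c. recurrent V s mult (minus_conf V s mult c v))"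

end

theory Submission
  imports Defs
begin

text \<open>Write \<open>p = deg - c\<close>. The parking condition for \<open>p\<close> on a set \<open>S\<close> says precisely that
  \<open>S\<close> is not a forbidden subconfiguration of \<open>c\<close>, so \<open>p\<close> is a parking function iff \<open>c\<close>
  is recurrent. Applied to the induced graphs \<open>G\<^sup>A\<close> and \<open>G\<^sup>B\<close>, the same translation turns
  decomposability of \<open>p\<close> with respect to \<open>(A, B)\<close> into: \<open>B\<close> is forbidden when its edges to
  the sink are counted, and no nonempty subset of \<open>A\<close> is forbidden when its edges to \<open>B\<close>
  are counted. Given such a decomposition, the second condition for \<open>S = A\<close> yields a vertex
  \<open>v \<in> A\<close> in \<open>V\<^sub>M(c)\<close>, and \<open>B\<close> is then forbidden for \<open>c\<^sup>v\<^sup>-\<close>. Conversely, if \<open>c\<^sup>v\<^sup>-\<close> is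
  not recurrent for some \<open>v \<in> V\<^sub>M(c)\<close>, the largest set \<open>B \<subseteq> V - {s, v}\<close> that is forbidden
  with sink edges counted, and its complement \<open>A\<close>, decompose \<open>p\<close>.\<close>

lemma deg_in_mono:
  assumes "finite Y" "X \<subseteq> Y"
  shows "deg_in mult X v \<le> deg_in mult Y v"
  unfolding deg_in_def by (rule sum_mono2[OF assms]) auto

lemma deg_in_Un:
  assumes "finite X" "finite Y" "X \<inter> Y = {}"
  shows "deg_in mult (X \<union> Y) v = deg_in mult X v + deg_in mult Y v"
  unfolding deg_in_def by (rule sum.union_disjoint[OF assms])

lemma deg_in_empty [simp]: "deg_in mult {} v = 0"
  unfolding deg_in_def by simp

lemma deg_in_insert [simp]:
  "finite X \<Longrightarrow> s \<notin> X \<Longrightarrow> deg_in mult (insert s X) v = mult v s + deg_in mult X v"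
  unfolding deg_in_def by simp

lemma deg_in_Diff:
  assumes "finite W" "S \<subseteq> W"
  shows "int (deg_in mult (W - S) v) = int (deg_in mult W v) - int (deg_in mult S v)"
  using sum.subset_diff[OF assms(2,1), of "mult v"] unfolding deg_in_def by simp

lemma is_PF_iff_recurrent:
  assumes "finite W"
    and sum_deg: "\<forall>v\<in>W - {s}. p v + c v = int (deg_in mult W v)"
  shows "is_PF W s mult p \<longleftrightarrow> recurrent W s mult c"
proof -
  have threshold: "p v \<le> int (deg_in mult (W - S) v) \<longleftrightarrow> \<not> c v < int (deg_in mult S v)"
    if "S \<subseteq> W - {s}" "v \<in> S" for S v
  proof -
    have "int (deg_in mult (W - S) v) = int (deg_in mult W v) - int (deg_in mult S v)"
      using that by (intro deg_in_Diff[OF assms(1)]) blast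
    moreover have "p v + c v = int (deg_in mult W v)" using that sum_deg by blast
    ultimately show ?thesis by linarith
  qed
  have positive: "1 \<le> p v \<longleftrightarrow> c v < int (deg_in mult W v)" if "v \<in> W - {s}" for v
  proof -
    have "p v + c v = int (deg_in mult W v)" using that sum_deg by blast
    then show ?thesis by linarith
  qed
  have subset_condition:
    "(\<exists>v\<in>S. p v \<le> int (deg_in mult (W - S) v)) \<longleftrightarrow> \<not> (\<forall>v\<in>S. c v < int (deg_in mult S v))"
    if "S \<subseteq> W - {s}" for S
    using threshold[OF that] by blast
  have "(\<forall>v\<in>W - {s}. 1 \<le> p v) \<longleftrightarrow> stable W s mult c"
    unfolding stable_def by (rule ball_cong[OF refl positive])
  moreover have "(\<forall>S. S \<subseteq> W - {s} \<and> S \<noteq> {} \<longrightarrow> (\<exists>v\<in>S. p v \<le> int (deg_in mult (W - S) v))) \<longleftrightarrow>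
      \<not> (\<exists>F. F \<noteq> {} \<and> F \<subseteq> W - {s} \<and> (\<forall>v\<in>F. c v < int (deg_in mult F v)))"
    using subset_condition by (smt (verit))
  ultimately show ?thesis
    unfolding is_PF_def recurrent_def by (simp only:)
qed

text \<open>Dhar's forbidden subconfigurations, generalised so that the edges from \<open>F\<close> into \<open>X\<close>
  count as well; recurrence uses \<open>X = {}\<close>.\<close>

definition forbidden :: "('a \<Rightarrow> 'a \<Rightarrow> nat) \<Rightarrow> 'a set \<Rightarrow> ('a \<Rightarrow> int) \<Rightarrow> 'a set \<Rightarrow> bool" where
  "forbidden mult X c F \<longleftrightarrow> (\<forall>v\<in>F. c v < int (deg_in mult (F \<union> X) v))"

lemma recurrent_iff_no_forbidden:
  "recurrent V s mult c \<longleftrightarrow>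
     stable V s mult c \<and> (\<forall>F\<subseteq>V - {s}. F \<noteq> {} \<longrightarrow> \<not> forbidden mult {} c F)"
  unfolding recurrent_def forbidden_def by auto

lemma forbidden_mono:
  assumes "forbidden mult X c F" "X \<subseteq> Y" "finite (F \<union> Y)"
  shows "forbidden mult Y c F"
  unfolding forbidden_def
proof
  fix v assume "v \<in> F"
  then have "c v < int (deg_in mult (F \<union> X) v)" using assms(1) unfolding forbidden_def by blast
  also have "\<dots> \<le> int (deg_in mult (F \<union> Y) v)" using assms(2,3) deg_in_mono[of "F \<union> Y" "F \<union> X"] by auto
  finally show "c v < int (deg_in mult (F \<union> Y) v)" .
qed

lemma forbidden_Un:
  assumes "forbidden mult (G \<union> X) c F" "forbidden mult X c G" "finite (F \<union> G \<union> X)"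
  shows "forbidden mult X c (F \<union> G)"
proof -
  have "forbidden mult (F \<union> X) c G"
    using forbidden_mono[OF assms(2)] assms(3) by (simp add: Un_ac)
  then show ?thesis using assms(1) unfolding forbidden_def by (auto simp: Un_ac)
qed

lemma forbidden_greatest:
  assumes "finite D" "finite X"
  obtains B where "B \<subseteq> D" "forbidden mult X c B"
    "\<And>F. F \<subseteq> D \<Longrightarrow> forbidden mult X c F \<Longrightarrow> F \<subseteq> B"
proof -
  let ?candidates = "{B. B \<subseteq> D \<and> forbidden mult X c B}"
  have "finite ?candidates" using assms(1) by simp
  moreover have "{} \<in> ?candidates" unfolding forbidden_def by simp
  ultimately obtain B where B: "B \<subseteq> D" "forbidden mult X c B"
    and maximal: "\<And>B'. B' \<subseteq> D \<Longrightarrow> forbidden mult X c B' \<Longrightarrow> B \<subseteq> B' \<Longrightarrow> B = B'"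
    using finite_has_maximal[of ?candidates] by (metis (no_types, lifting) empty_iff mem_Collect_eq)
  have "F \<subseteq> B" if F: "F \<subseteq> D" "forbidden mult X c F" for F
  proof -
    have "finite (F \<union> B \<union> X)" using F(1) B(1) assms finite_subset by auto
    then have "forbidden mult (B \<union> X) c F"
      using forbidden_mono[OF F(2)] by (simp add: Un_assoc)
    then have "forbidden mult X c (F \<union> B)"
      using forbidden_Un[OF _ B(2) \<open>finite (F \<union> B \<union> X)\<close>] by blast
    with F(1) B(1) have "B = F \<union> B" by (intro maximal) auto
    then show ?thesis by blast
  qed
  with B that show ?thesis by blast
qed

lemma recurrent_induced_iff_forbidden:
  assumes "recurrent V s mult c" "B \<subseteq> V - {s}"
  shows "recurrent (B \<union> {s}) s mult c \<longleftrightarrow> forbidden mult {s} c B"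
proof -
  have "B \<union> {s} - {s} = B" using assms(2) by blast
  moreover have "\<forall>F\<subseteq>B. F \<noteq> {} \<longrightarrow> \<not> forbidden mult {} c F"
    using assms recurrent_iff_no_forbidden[of V s mult c] by blast
  ultimately show ?thesis
    unfolding recurrent_iff_no_forbidden stable_def forbidden_def by simp
qed

lemma deg_in_partition:
  assumes "finite V" "s \<in> V" "A \<inter> B = {}" "A \<union> B = V - {s}"
  shows "deg_in mult V v = deg_in mult A v + deg_in mult B v + mult v s"
proof -
  have "finite (A \<union> B)" using assms(1,4) by simp
  then have "finite A" "finite B" by simp_all
  moreover have "V = insert s (A \<union> B)" "s \<notin> A \<union> B" using assms(2,4) by auto
  ultimately show ?thesis using deg_in_Un[of A B mult v] assms(3) by simp
qed

lemma recurrent_induced_minus_deg_iff: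
  assumes "finite V" "s \<in> V" "stable V s mult c" "A \<inter> B = {}" "A \<union> B = V - {s}"
  shows "recurrent (A \<union> {s}) s mult (\<lambda>v. c v - int (deg_in mult B v)) \<longleftrightarrow>
         (\<forall>S\<subseteq>A. S \<noteq> {} \<longrightarrow> \<not> forbidden mult B c S)"
proof -
  let ?c' = "\<lambda>v. c v - int (deg_in mult B v)"
  have A_s: "A \<union> {s} - {s} = A" and s_A: "s \<notin> A" using assms(5) by blast+
  have fin: "finite A" "finite B" using assms(1,5) by (metis finite_Diff finite_Un)+
  have "stable (A \<union> {s}) s mult ?c'"
    unfolding stable_def A_s
  proof
    fix v assume "v \<in> A"
    then have "c v < int (deg_in mult V v)" using assms(3,5) unfolding stable_def by blast
    then show "?c' v < int (deg_in mult (A \<union> {s}) v)"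
      using deg_in_partition[OF assms(1,2,4,5), of mult v] fin(1) s_A by simp
  qed
  moreover have "forbidden mult {} ?c' S \<longleftrightarrow> forbidden mult B c S" if "S \<subseteq> A" for S
  proof -
    have "finite S" using that fin(1) by (rule finite_subset)
    moreover have "S \<inter> B = {}" using that assms(4) by blast
    ultimately have "deg_in mult (S \<union> B) v = deg_in mult S v + deg_in mult B v" for v
      by (rule deg_in_Un[OF _ fin(2)])
    then show ?thesis unfolding forbidden_def by (simp add: algebra_simps)
  qed
  ultimately show ?thesis
    unfolding recurrent_iff_no_forbidden A_s by blast
qed

lemma decomposable_iff_forbidden:
  assumes "finite V" "s \<in> V" "recurrent V s mult c" "A \<inter> B = {}" "A \<union> B = V - {s}"
  shows "decomposable V s mult (\<lambda>v. int (deg_in mult V v) - c v) A B \<longleftrightarrow>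
         forbidden mult {s} c B \<and> (\<forall>S\<subseteq>A. S \<noteq> {} \<longrightarrow> \<not> forbidden mult B c S)"
proof -
  have "finite (A \<union> B)" "s \<notin> A \<union> B" using assms(1,5) by auto
  then have fin: "finite A" "finite B" and s_AB: "s \<notin> A" "s \<notin> B" by simp_all
  note deg_V = deg_in_partition[OF assms(1,2,4,5), of mult]
  have "is_PF (A \<union> {s}) s mult (\<lambda>v. int (deg_in mult V v) - c v) \<longleftrightarrow>
        recurrent (A \<union> {s}) s mult (\<lambda>v. c v - int (deg_in mult B v))"
    by (rule is_PF_iff_recurrent) (use fin s_AB deg_V in simp_all)
  moreover have "is_PF (B \<union> {s}) s mult (\<lambda>v. int (deg_in mult V v) - c v - int (deg_in mult A v)) \<longleftrightarrow>
        recurrent (B \<union> {s}) s mult c"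
    by (rule is_PF_iff_recurrent) (use fin s_AB deg_V in simp_all)
  moreover have "stable V s mult c" using assms(3) unfolding recurrent_def by blast
  then have "recurrent (A \<union> {s}) s mult (\<lambda>v. c v - int (deg_in mult B v)) \<longleftrightarrow>
             (\<forall>S\<subseteq>A. S \<noteq> {} \<longrightarrow> \<not> forbidden mult B c S)"
    by (rule recurrent_induced_minus_deg_iff[OF assms(1,2) _ assms(4,5)])
  moreover have "recurrent (B \<union> {s}) s mult c \<longleftrightarrow> forbidden mult {s} c B"
    using assms(5) by (intro recurrent_induced_iff_forbidden[OF assms(3)]) blast
  ultimately show ?thesis
    unfolding decomposable_def by (simp only: conj_commute)
qed

lemma VM_iff:
  assumes "finite V" "s \<in> V"
  shows "v \<in> VM V s mult c \<longleftrightarrow> v \<in> V - {s} \<and> int (deg_in mult (V - {s}) v) \<le> c v"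
  using deg_in_Diff[OF assms(1), of "{s}" mult v] assms(2) unfolding VM_def by auto

lemma minus_conf_le: "minus_conf V s mult c v w \<le> c w"
  unfolding minus_conf_def by simp

lemma recurrent_minus_conf_iff:
  assumes "finite V" "s \<in> V" "recurrent V s mult c" "v \<in> VM V s mult c"
  shows "recurrent V s mult (minus_conf V s mult c v) \<longleftrightarrow>
         (\<forall>F\<subseteq>V - {s} - {v}. F \<noteq> {} \<longrightarrow> \<not> forbidden mult {s} c F)"
proof -
  let ?c' = "minus_conf V s mult c v"
  have v: "v \<in> V - {s}" "int (deg_in mult (V - {s}) v) \<le> c v"
    using assms(4) VM_iff[OF assms(1,2)] by blast+
  have "stable V s mult ?c'"
    unfolding stable_def
  proof
    fix w assume "w \<in> V - {s}"
    then have "c w < int (deg_in mult V w)" using assms(3) unfolding recurrent_def stable_def by blast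
    then show "?c' w < int (deg_in mult V w)" using minus_conf_le[of V s mult c v w] by linarith
  qed
  have not_forbidden_v: "\<not> forbidden mult {} ?c' F" if "F \<subseteq> V - {s}" "v \<in> F" for F
  proof -
    have "int (deg_in mult F v) \<le> int (deg_in mult (V - {s}) v)"
      using assms(1) that(1) by (simp add: deg_in_mono)
    also have "\<dots> \<le> ?c' v" using v(2) unfolding minus_conf_def by simp
    finally show ?thesis using that(2) unfolding forbidden_def by force
  qed
  have shift: "forbidden mult {} ?c' F \<longleftrightarrow> forbidden mult {s} c F" if "F \<subseteq> V - {s} - {v}" for F
  proof -
    have "finite F" using assms(1) that by (meson finite_Diff finite_subset)
    moreover have "s \<notin> F" using that by blast
    ultimately have "deg_in mult (F \<union> {s}) w = mult w s + deg_in mult F w" for w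
      by simp
    moreover have "?c' w = c w - int (mult w s)" if "w \<in> F" for w
      using that \<open>F \<subseteq> V - {s} - {v}\<close> unfolding minus_conf_def by auto
    ultimately show ?thesis unfolding forbidden_def by auto
  qed
  have "(\<forall>F\<subseteq>V - {s}. F \<noteq> {} \<longrightarrow> \<not> forbidden mult {} ?c' F) \<longleftrightarrow>
        (\<forall>F\<subseteq>V - {s} - {v}. F \<noteq> {} \<longrightarrow> \<not> forbidden mult {} ?c' F)"
  proof (intro iffI allI impI)
    fix F assume "\<forall>F\<subseteq>V - {s} - {v}. F \<noteq> {} \<longrightarrow> \<not> forbidden mult {} ?c' F"
      and F: "F \<subseteq> V - {s}" "F \<noteq> {}"
    then show "\<not> forbidden mult {} ?c' F"
      using not_forbidden_v[OF F(1)] by (cases "v \<in> F") auto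
  qed auto
  also have "\<dots> \<longleftrightarrow> (\<forall>F\<subseteq>V - {s} - {v}. F \<noteq> {} \<longrightarrow> \<not> forbidden mult {s} c F)"
    using shift by auto
  finally show ?thesis unfolding recurrent_iff_no_forbidden using \<open>stable V s mult ?c'\<close> by simp
qed

lemma decomposable_imp_not_strongly_recurrent:
  assumes "finite V" "s \<in> V" "recurrent V s mult c"
    and AB: "A \<noteq> {}" "B \<noteq> {}" "A \<inter> B = {}" "A \<union> B = V - {s}"
    and dec: "decomposable V s mult (\<lambda>v. int (deg_in mult V v) - c v) A B"
  shows "\<not> strongly_recurrent V s mult c"
proof -
  have B: "forbidden mult {s} c B" and A: "\<not> forbidden mult B c A"
    using dec decomposable_iff_forbidden[OF assms(1-3) AB(3,4)] AB(1) by blast+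
  then obtain v where v: "v \<in> A" "int (deg_in mult (A \<union> B) v) \<le> c v"
    unfolding forbidden_def by (auto simp: not_less)
  then have "v \<in> VM V s mult c" using VM_iff[OF assms(1,2)] AB(4) by auto
  moreover have "B \<subseteq> V - {s} - {v}" using AB(3,4) v(1) by blast
  ultimately have "\<not> recurrent V s mult (minus_conf V s mult c v)"
    using recurrent_minus_conf_iff[OF assms(1-3)] B AB(2) by blast
  with \<open>v \<in> VM V s mult c\<close> show ?thesis unfolding strongly_recurrent_def by blast
qed

lemma not_strongly_recurrent_imp_decomposable:
  assumes "finite V" "s \<in> V" "recurrent V s mult c" "\<not> strongly_recurrent V s mult c"
  shows "\<exists>A B. A \<noteq> {} \<and> B \<noteq> {} \<and> A \<inter> B = {} \<and> A \<union> B = V - {s} \<and>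
           decomposable V s mult (\<lambda>v. int (deg_in mult V v) - c v) A B"
proof -
  obtain v where v_VM: "v \<in> VM V s mult c"
    and "\<not> recurrent V s mult (minus_conf V s mult c v)"
    using assms(3,4) unfolding strongly_recurrent_def by blast
  then obtain F where F: "F \<subseteq> V - {s} - {v}" "F \<noteq> {}" "forbidden mult {s} c F"
    using recurrent_minus_conf_iff[OF assms(1-3)] by blast
  have v: "v \<in> V - {s}" "int (deg_in mult (V - {s}) v) \<le> c v"
    using v_VM VM_iff[OF assms(1,2)] by blast+
  obtain B where B: "B \<subseteq> V - {s} - {v}" "forbidden mult {s} c B"
    and greatest: "\<And>F. F \<subseteq> V - {s} - {v} \<Longrightarrow> forbidden mult {s} c F \<Longrightarrow> F \<subseteq> B"
    using forbidden_greatest[of "V - {s} - {v}" "{s}" mult c] assms(1) by blast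
  define A where "A = V - {s} - B"
  have AB: "A \<noteq> {}" "B \<noteq> {}" "A \<inter> B = {}" "A \<union> B = V - {s}"
    using B(1) v(1) greatest[OF F(1,3)] F(2) unfolding A_def by auto
  have "\<not> forbidden mult B c S" if S: "S \<subseteq> A" "S \<noteq> {}" for S
  proof
    assume S_forbidden: "forbidden mult B c S"
    have "S \<union> B \<subseteq> V - {s}" using S(1) AB(4) by blast
    then have deg_SB: "int (deg_in mult (S \<union> B) v) \<le> c v"
      using v(2) assms(1) deg_in_mono[of "V - {s}" "S \<union> B" mult v] by simp
    show False
    proof (cases "v \<in> S")
      case True
      then have "c v < int (deg_in mult (S \<union> B) v)" using S_forbidden unfolding forbidden_def by blast
      then show False using deg_SB by linarith
    next
      case False
      have fin: "finite (S \<union> B \<union> {s})" using \<open>S \<union> B \<subseteq> V - {s}\<close> assms(1) finite_subset by auto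
      have "forbidden mult (B \<union> {s}) c S"
        by (rule forbidden_mono[OF S_forbidden]) (use fin in \<open>auto simp: Un_assoc\<close>)
      then have "forbidden mult {s} c (S \<union> B)" using forbidden_Un B(2) fin by blast
      moreover have "S \<union> B \<subseteq> V - {s} - {v}" using \<open>S \<union> B \<subseteq> V - {s}\<close> False B(1) by blast
      ultimately have "S \<subseteq> B" using greatest by blast
      then show False using S AB(3) by blast
    qed
  qed
  then have "decomposable V s mult (\<lambda>v. int (deg_in mult V v) - c v) A B"
    using decomposable_iff_forbidden[OF assms(1-3) AB(3,4)] B(2) by blast
  with AB show ?thesis by blast
qed

theorem theorem2p11:
  fixes V :: "'a set" and s :: 'a and mult :: "'a \<Rightarrow> 'a \<Rightarrow> nat" and c :: "'a \<Rightarrow> int"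
  assumes "rooted_graph V s mult"
    and "connected_graph V mult"
  shows "strongly_recurrent V s mult c \<longleftrightarrow>
         is_PPF V s mult (\<lambda>v. int (deg_in mult V v) - c v)"
proof -
  have V: "finite V" "s \<in> V" using assms(1) unfolding rooted_graph_def by blast+
  have PF: "is_PF V s mult (\<lambda>v. int (deg_in mult V v) - c v) \<longleftrightarrow> recurrent V s mult c"
    using V(1) by (rule is_PF_iff_recurrent) simp
  show ?thesis
  proof (cases "recurrent V s mult c")
    case False
    with PF show ?thesis unfolding strongly_recurrent_def is_PPF_def by blast
  next
    case True
    have "strongly_recurrent V s mult c \<longleftrightarrow>
          \<not> (\<exists>A B. A \<noteq> {} \<and> B \<noteq> {} \<and> A \<inter> B = {} \<and> A \<union> B = V - {s} \<and>
                 decomposable V s mult (\<lambda>v. int (deg_in mult V v) - c v) A B)"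
      using decomposable_imp_not_strongly_recurrent[OF V True]
        not_strongly_recurrent_imp_decomposable[OF V True] by metis
    with PF True show ?thesis unfolding is_PPF_def by simp
  qed
qed

end
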